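(* Let $(x,y)$ be a vertex of the polytope $P$. Then either $y$ is integral, or $y$ has exactly two noninteger components and for every $i\in F$ we have $x_i=0$ or $x_i=s_iy_i$.
   Context: Given a finite set $F$ of facilities with capacities $s_i\ge 0$, a demand $d$ and an integer $k$, let $P\subseteq\mathbb{R}^F\times\mathbb{R}^F$ be the set of $(x,y)$ satisfying $\sum_{i\in F}x_i=d$, $\sum_{i\in F}y_i=k$ (equality), $0\le x_i\le s_iy_i$ for all $i\in F$, and $0\le y_i\le 1$ for all $i\in F$. *)

theory Defs
  imports "HOL-Analysis.Analysis"
begin

text \<open>Facilities are the elements of a finite type 'i (so F = UNIV).
  The polytope P of pairs (x,y) with sum x = d, sum y = k,
  0 <= x_i <= s_i y_i, 0 <= y_i <= 1.\<close>

definition cap_polytope :: "real^'i::finite \<Rightarrow> real \<Rightarrow> int \<Rightarrow> ((real^'i) \<times> (real^'i)) set" where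
  "cap_polytope s d k =
     {xy. (\<Sum>i\<in>UNIV. (fst xy) $ i) = d \<and> (\<Sum>i\<in>UNIV. (snd xy) $ i) = of_int k \<and>
          (\<forall>i. 0 \<le> (fst xy) $ i \<and> (fst xy) $ i \<le> s $ i * (snd xy) $ i) \<and>
          (\<forall>i. 0 \<le> (snd xy) $ i \<and> (snd xy) $ i \<le> 1)}"

end

theory Submission
  imports Defs
begin

text \<open>A vertex (x,y) admits no feasible direction (a,b) with b \<noteq> 0 that keeps every tight
  constraint tight. Such a direction may only move fractional y_i; on them a tight x_i must move
  with slope s_i (if x_i = s_i y_i) or 0 (if x_i = 0), and both the sum of b and the sum of a
  must vanish. Since the y_i sum to the integer k, the number of fractional y_i is never one.
  With three fractional y_i the two homogeneous equations in three unknowns have a nonzero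
  solution; with two, the equation for the sum of a can be absorbed by any x_m strictly between
  its bounds.\<close>

lemma not_extreme_point_of_symmetric_pair:
  fixes p v :: "'a::real_vector"
  assumes "p + v \<in> S" "p - v \<in> S" "v \<noteq> 0"
  shows "\<not> p extreme_point_of S"
proof -
  have "p + v \<noteq> p - v"
  proof
    assume "p + v = p - v"
    hence "2 *\<^sub>R v = 0" by (simp add: scaleR_2 algebra_simps)
    with assms(3) show False by simp
  qed
  hence "midpoint (p + v) (p - v) \<in> open_segment (p + v) (p - v)" by simp
  moreover have "midpoint (p + v) (p - v) = p" by (simp add: midpoint_def scaleR_2)
  ultimately have "p \<in> open_segment (p + v) (p - v)" by simp
  with assms(1,2) show ?thesis by (auto simp: extreme_point_of_def)
qed

lemma eventually_nonneg_affine_at_0: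
  fixes p q :: real
  assumes "0 \<le> p" "p = 0 \<Longrightarrow> q = 0"
  shows "\<forall>\<^sub>F e in nhds 0. 0 \<le> p + e * q"
proof (cases "p = 0")
  case False
  have "((\<lambda>e. p + e * q) \<longlongrightarrow> p + 0 * q) (nhds 0)"
    by (intro tendsto_intros filterlim_ident)
  moreover have "0 < p" using False assms(1) by simp
  ultimately have "\<forall>\<^sub>F e in nhds 0. 0 < p + e * q" by (simp add: order_tendstoD(1))
  then show ?thesis by eventually_elim simp
qed (use assms in simp)

lemma Ints_sum_card_non_Ints_ne_1:
  fixes f :: "'a \<Rightarrow> real"
  assumes "finite A" "sum f A \<in> \<int>"
  shows "card {i\<in>A. f i \<notin> \<int>} \<noteq> 1"
proof
  assume "card {i\<in>A. f i \<notin> \<int>} = 1"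
  then obtain i where i: "{i\<in>A. f i \<notin> \<int>} = {i}" by (rule card_1_singletonE)
  hence "i \<in> A" by blast
  have rest: "sum f (A - {i}) \<in> \<int>" by (rule Ints_sum) (use i in blast)
  have "f i = sum f A - sum f (A - {i})"
    using sum.remove[OF assms(1) \<open>i \<in> A\<close>, of f] by simp
  also have "\<dots> \<in> \<int>" using assms(2) rest by (rule Ints_diff)
  finally show False using i by blast
qed

lemma exists_nonzero_common_null_vector:
  fixes c1 c2 c3 :: real
  obtains t1 t2 t3 where "t1 \<noteq> 0 \<or> t2 \<noteq> 0 \<or> t3 \<noteq> 0" "t1 + t2 + t3 = 0"
    "c1 * t1 + c2 * t2 + c3 * t3 = 0"
proof (cases "c1 = c2 \<and> c2 = c3")
  case True
  show ?thesis by (rule that[of 1 "-1" 0]) (use True in auto)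
next
  case False
  \<comment> \<open>the cross product of (1,1,1) and (c1,c2,c3)\<close>
  show ?thesis
    by (rule that[of "c3 - c2" "c1 - c3" "c2 - c1"]) (use False in \<open>auto simp: algebra_simps\<close>)
qed

lemma cap_polytope_bounds_eventually:
  fixes x y s a b :: real
  assumes "0 \<le> x" "x \<le> s * y" "0 \<le> y" "y \<le> 1" "b \<noteq> 0 \<Longrightarrow> 0 < y \<and> y < 1"
    "x = 0 \<Longrightarrow> a = 0" "x = s * y \<Longrightarrow> a = s * b"
  shows "\<forall>\<^sub>F e in nhds 0.
    0 \<le> x + e * a \<and> x + e * a \<le> s * (y + e * b) \<and> 0 \<le> y + e * b \<and> y + e * b \<le> 1"
proof -
  have "\<forall>\<^sub>F e in nhds 0. 0 \<le> x + e * a"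
    using assms by (intro eventually_nonneg_affine_at_0) auto
  moreover have "\<forall>\<^sub>F e in nhds 0. 0 \<le> (s * y - x) + e * (s * b - a)"
    using assms by (intro eventually_nonneg_affine_at_0) auto
  moreover have "\<forall>\<^sub>F e in nhds 0. 0 \<le> y + e * b"
    using assms by (intro eventually_nonneg_affine_at_0) auto
  moreover have "\<forall>\<^sub>F e in nhds 0. 0 \<le> (1 - y) + e * (- b)"
    using assms by (intro eventually_nonneg_affine_at_0) auto
  ultimately show ?thesis
    by eventually_elim (simp add: algebra_simps)
qed

lemma cap_polytope_not_extreme_point_if_feasible_direction:
  fixes s x y a b :: "real^'i::finite"
  assumes mem: "(x, y) \<in> cap_polytope s d k"
    and sum_a: "(\<Sum>i\<in>UNIV. a $ i) = 0" and sum_b: "(\<Sum>i\<in>UNIV. b $ i) = 0" and "b \<noteq> 0"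
    and frac: "\<And>i. b $ i \<noteq> 0 \<Longrightarrow> 0 < y $ i \<and> y $ i < 1"
    and lower: "\<And>i. x $ i = 0 \<Longrightarrow> a $ i = 0"
    and upper: "\<And>i. x $ i = s $ i * y $ i \<Longrightarrow> a $ i = s $ i * b $ i"
  shows "\<not> (x, y) extreme_point_of cap_polytope s d k"
proof -
  have sums: "(\<Sum>i\<in>UNIV. x $ i) = d" "(\<Sum>i\<in>UNIV. y $ i) = of_int k"
    and bounds: "\<And>i. 0 \<le> x $ i \<and> x $ i \<le> s $ i * y $ i \<and> 0 \<le> y $ i \<and> y $ i \<le> 1"
    using mem by (auto simp: cap_polytope_def)
  have "\<forall>\<^sub>F e in nhds 0. \<forall>i. 0 \<le> x$i + e * a$i \<and> x$i + e * a$i \<le> s$i * (y$i + e * b$i)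
      \<and> 0 \<le> y$i + e * b$i \<and> y$i + e * b$i \<le> 1"
    using bounds frac lower upper
    by (intro eventually_all_finite allI cap_polytope_bounds_eventually) auto
  then obtain \<epsilon> :: real where "\<epsilon> > 0" and small: "\<And>e. \<bar>e\<bar> < \<epsilon> \<Longrightarrow>
      \<forall>i. 0 \<le> x$i + e * a$i \<and> x$i + e * a$i \<le> s$i * (y$i + e * b$i)
        \<and> 0 \<le> y$i + e * b$i \<and> y$i + e * b$i \<le> 1"
    unfolding eventually_nhds_metric dist_real_def by auto
  have in_P: "(x, y) + e *\<^sub>R (a, b) \<in> cap_polytope s d k" if "\<bar>e\<bar> < \<epsilon>" for e
    using small[OF that] sums sum_a sum_b
    by (simp add: cap_polytope_def sum.distrib flip: sum_distrib_left)
  define e where "e = \<epsilon> / 2"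
  have "\<bar>e\<bar> < \<epsilon>" "\<bar>-e\<bar> < \<epsilon>" "e \<noteq> 0" using \<open>\<epsilon> > 0\<close> by (auto simp: e_def)
  with in_P[of e] in_P[of "-e"] have "(x, y) + e *\<^sub>R (a, b) \<in> cap_polytope s d k"
    "(x, y) - e *\<^sub>R (a, b) \<in> cap_polytope s d k"
    by simp_all
  moreover have "e *\<^sub>R (a, b) \<noteq> 0" using \<open>e \<noteq> 0\<close> \<open>b \<noteq> 0\<close> by (simp add: zero_prod_def)
  ultimately show ?thesis by (rule not_extreme_point_of_symmetric_pair)
qed

lemma cap_polytope_not_extreme_point_if_fractional_direction:
  fixes s x y a b :: "real^'i::finite"
  assumes mem: "(x, y) \<in> cap_polytope s d k"
    and sum_b: "(\<Sum>i\<in>UNIV. b $ i) = 0" and "b \<noteq> 0"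
    and frac: "\<And>i. b $ i \<noteq> 0 \<Longrightarrow> 0 < y $ i \<and> y $ i < 1"
    and sum_a: "(\<Sum>i\<in>UNIV. a $ i) = 0"
    and tight: "\<And>i. x $ i = 0 \<or> x $ i = s $ i * y $ i \<Longrightarrow>
      a $ i = (if x $ i = s $ i * y $ i then s $ i else 0) * b $ i"
  shows "\<not> (x, y) extreme_point_of cap_polytope s d k"
proof (rule cap_polytope_not_extreme_point_if_feasible_direction[OF mem sum_a sum_b \<open>b \<noteq> 0\<close> frac])
  fix i
  assume "x $ i = 0"
  \<comment> \<open>if also x_i = s_i y_i, then s_i = 0 because y_i > 0 wherever b_i \<noteq> 0\<close>
  with tight[of i] frac[of i] show "a $ i = 0" by (cases "b $ i = 0") auto
next
  fix i
  assume "x $ i = s $ i * y $ i"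
  with tight[of i] show "a $ i = s $ i * b $ i" by simp
qed

lemma cap_polytope_non_Ints_bounds:
  assumes "(x, y) \<in> cap_polytope s d k" "y $ i \<notin> \<int>"
  shows "0 < y $ i \<and> y $ i < 1"
proof -
  have "0 \<le> y $ i" "y $ i \<le> 1" using assms(1) by (auto simp: cap_polytope_def)
  moreover have "y $ i \<noteq> 0" "y $ i \<noteq> 1" using assms(2) by auto
  ultimately show ?thesis by linarith
qed

lemma cap_polytope_extreme_point_card_non_Ints_le_2:
  fixes s x y :: "real^'i::finite"
  assumes ext: "(x, y) extreme_point_of cap_polytope s d k"
  shows "card {i. y $ i \<notin> \<int>} \<le> 2"
proof (rule ccontr)
  have mem: "(x, y) \<in> cap_polytope s d k" using ext by (simp add: extreme_point_of_def)
  assume "\<not> card {i. y $ i \<notin> \<int>} \<le> 2"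
  hence "3 \<le> card {i. y $ i \<notin> \<int>}" by linarith
  then obtain T where "T \<subseteq> {i. y $ i \<notin> \<int>}" "card T = 3"
    by (rule obtain_subset_with_card_n)
  then obtain i j l where "i \<noteq> j" "j \<noteq> l" "i \<noteq> l"
    and frac_ijl: "y $ i \<notin> \<int>" "y $ j \<notin> \<int>" "y $ l \<notin> \<int>"
    by (auto simp: card_3_iff)
  define c where "c t = (if x $ t = s $ t * y $ t then s $ t else 0)" for t
  obtain t1 t2 t3 where nz: "t1 \<noteq> 0 \<or> t2 \<noteq> 0 \<or> t3 \<noteq> 0" and "t1 + t2 + t3 = 0"
    and "c i * t1 + c j * t2 + c l * t3 = 0"
    by (rule exists_nonzero_common_null_vector)
  define b :: "real^'i" where
    "b = (\<chi> t. (if t = i then t1 else 0) + (if t = j then t2 else 0) + (if t = l then t3 else 0))"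
  define a :: "real^'i" where "a = (\<chi> t. c t * b $ t)"
  have b_ijl: "b $ i = t1" "b $ j = t2" "b $ l = t3"
    using \<open>i \<noteq> j\<close> \<open>j \<noteq> l\<close> \<open>i \<noteq> l\<close> by (auto simp: b_def)
  have "(\<Sum>t\<in>UNIV. b $ t) = 0"
    using \<open>t1 + t2 + t3 = 0\<close> by (simp add: b_def sum.distrib)
  moreover have "b \<noteq> 0" using nz b_ijl by (auto simp: vec_eq_iff)
  moreover have "0 < y $ t \<and> y $ t < 1" if "b $ t \<noteq> 0" for t
    using that frac_ijl cap_polytope_non_Ints_bounds[OF mem] by (auto simp: b_def split: if_splits)
  moreover have "(\<lambda>t. a $ t) = (\<lambda>t. (if t = i then c i * t1 else 0) + (if t = j then c j * t2 else 0)
      + (if t = l then c l * t3 else 0))"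
    using \<open>i \<noteq> j\<close> \<open>j \<noteq> l\<close> \<open>i \<noteq> l\<close> by (auto simp: a_def b_def fun_eq_iff)
  hence "(\<Sum>t\<in>UNIV. a $ t) = 0"
    using \<open>c i * t1 + c j * t2 + c l * t3 = 0\<close> by (simp add: sum.distrib)
  ultimately have "\<not> (x, y) extreme_point_of cap_polytope s d k"
    by (rule cap_polytope_not_extreme_point_if_fractional_direction[OF mem]) (auto simp: a_def c_def)
  with ext show False by contradiction
qed

lemma cap_polytope_extreme_point_tight_if_two_non_Ints:
  fixes s x y :: "real^'i::finite"
  assumes ext: "(x, y) extreme_point_of cap_polytope s d k"
    and "i \<noteq> j" "y $ i \<notin> \<int>" "y $ j \<notin> \<int>"
  shows "x $ m = 0 \<or> x $ m = s $ m * y $ m"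
proof (rule ccontr)
  have mem: "(x, y) \<in> cap_polytope s d k" using ext by (simp add: extreme_point_of_def)
  assume free: "\<not> (x $ m = 0 \<or> x $ m = s $ m * y $ m)"
  define c where "c t = (if x $ t = s $ t * y $ t then s $ t else 0)" for t
  define b :: "real^'i" where "b = (\<chi> t. (if t = i then 1 else 0) - (if t = j then 1 else 0))"
  \<comment> \<open>the free coordinate x_m absorbs the imbalance c_i - c_j of the tight coordinates\<close>
  define a :: "real^'i" where "a = (\<chi> t. c t * b $ t + (if t = m then c j - c i else 0))"
  have "(\<Sum>t\<in>UNIV. b $ t) = 0" by (simp add: b_def sum_subtractf)
  moreover have "b \<noteq> 0" using \<open>i \<noteq> j\<close> by (auto simp: b_def vec_eq_iff)
  moreover have "0 < y $ t \<and> y $ t < 1" if "b $ t \<noteq> 0" for t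
    using that assms(3,4) cap_polytope_non_Ints_bounds[OF mem] by (auto simp: b_def split: if_splits)
  moreover have "(\<Sum>t\<in>UNIV. c t * b $ t) = (\<Sum>t\<in>UNIV. (if t = i then c i else 0) - (if t = j then c j else 0))"
    by (rule sum.cong) (auto simp: b_def)
  hence "(\<Sum>t\<in>UNIV. a $ t) = 0" by (simp add: a_def sum.distrib sum_subtractf)
  ultimately have "\<not> (x, y) extreme_point_of cap_polytope s d k"
    by (rule cap_polytope_not_extreme_point_if_fractional_direction[OF mem])
      (use free in \<open>auto simp: a_def c_def\<close>)
  with ext show False by contradiction
qed

theorem mainTheorem9:
  fixes s x y :: "real^'i::finite" and d :: real and k :: int
  assumes "\<forall>i. s $ i \<ge> 0"
    and "(x, y) extreme_point_of cap_polytope s d k"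
  shows "(\<forall>i. y $ i \<in> \<int>) \<or>
         (card {i. y $ i \<notin> \<int>} = 2 \<and> (\<forall>i. x $ i = 0 \<or> x $ i = s $ i * y $ i))"
proof -
  have "(x, y) \<in> cap_polytope s d k" using assms(2) by (simp add: extreme_point_of_def)
  hence "(\<Sum>i\<in>UNIV. y $ i) \<in> \<int>" by (simp add: cap_polytope_def)
  hence "card {i. y $ i \<notin> \<int>} \<noteq> 1" using Ints_sum_card_non_Ints_ne_1[of UNIV "\<lambda>i. y $ i"] by simp
  moreover have "card {i. y $ i \<notin> \<int>} \<le> 2"
    using assms(2) by (rule cap_polytope_extreme_point_card_non_Ints_le_2)
  ultimately consider "card {i. y $ i \<notin> \<int>} = 0" | "card {i. y $ i \<notin> \<int>} = 2" by linarith
  then show ?thesis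
  proof cases
    case 1
    then show ?thesis by simp
  next
    case 2
    then obtain i j where "i \<noteq> j" "y $ i \<notin> \<int>" "y $ j \<notin> \<int>" by (auto simp: card_2_iff)
    with 2 show ?thesis
      using cap_polytope_extreme_point_tight_if_two_non_Ints[OF assms(2)] by simp
  qed
qed

end
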